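(* Let $B$ be the open unit ball of $\mathbb{C}^n$ for a norm $\|\cdot\|$ and let $f:\Delta\to\mathbb{C}^n$ be a holomorphic map with $f(\Delta)\subset\overline B$. Then $\|f(0)+\zeta(f(z)-f(0))\|\le 1$ for every $z\in\Delta\setminus\{0\}$ and every $\zeta\in\mathbb{C}$ with $|\zeta|\le\frac{1-|z|}{2|z|}$.
   Context: $\Delta$ is the open unit disc of $\mathbb{C}$. *)

theory Defs
  imports "HOL-Complex_Analysis.Complex_Analysis"
begin

definition is_cnorm :: "(complex^'n \<Rightarrow> real) \<Rightarrow> bool" where
  "is_cnorm N \<longleftrightarrow>
     (\<forall>x. N x \<ge> 0) \<and>
     (\<forall>x. N x = 0 \<longleftrightarrow> x = 0) \<and>
     (\<forall>c x. N (c *s x) = cmod c * N x) \<and>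
     (\<forall>x y. N (x + y) \<le> N x + N y)"

end

theory Submission
  imports Defs
begin

text \<open>
  Evaluating a real linear functional on \<open>f\<close> gives a holomorphic function \<open>g\<close> on the disc
  with \<open>Re g > b\<close>. The Cayley transform \<open>(g - g 0) / (g + cnj (g 0) - 2b)\<close> maps the disc into
  itself and fixes \<open>0\<close>, so the Schwarz lemma bounds \<open>\<bar>g z - g 0\<bar>\<close> by
  \<open>2 \<bar>z\<bar> / (1 - \<bar>z\<bar>) \<cdot> (Re (g 0) - b)\<close>, which is exactly what keeps
  \<open>Re (g 0 + \<zeta> (g z - g 0)) \<ge> b\<close>. Since the closed unit ball of the norm is convex and closed,
  it is the intersection of the real half-spaces containing it, and the claim follows.
\<close>

lemma Re_pos_holomorphic_diff_bound:
  fixes G :: "complex \<Rightarrow> complex"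
  assumes holG: "G holomorphic_on ball 0 1"
    and pos: "\<And>w. w \<in> ball 0 1 \<Longrightarrow> Re (G w) > 0"
    and z: "z \<in> ball 0 1"
  shows "cmod (G z - G 0) * (1 - cmod z) \<le> 2 * Re (G 0) * cmod z"
proof -
  define a where "a = G 0"
  have Re_a: "Re a > 0"
    using pos[of 0] by (simp add: a_def)
  have den: "G w + cnj a \<noteq> 0" if "w \<in> ball 0 1" for w
  proof -
    have "Re (G w + cnj a) > 0"
      using pos[OF that] Re_a by simp
    then show ?thesis
      by (metis order_less_irrefl zero_complex.sel(1))
  qed
  define \<phi> where "\<phi> = (\<lambda>w. (G w - a) / (G w + cnj a))"
  have hol\<phi>: "\<phi> holomorphic_on ball 0 1"
    unfolding \<phi>_def using den by (intro holomorphic_intros holG) auto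
  have \<phi>_lt_1: "norm (\<phi> w) < 1" if "norm w < 1" for w
  proof -
    have w: "w \<in> ball 0 1" using that by simp
    have "(cmod (G w - a))\<^sup>2 < (cmod (G w + cnj a))\<^sup>2"
      using pos[OF w] Re_a unfolding cmod_power2 by (simp add: power2_eq_square algebra_simps)
    then have "cmod (G w - a) < cmod (G w + cnj a)"
      using power2_less_imp_less by fastforce
    then show ?thesis
      using den[OF w] by (simp add: \<phi>_def norm_divide divide_less_eq)
  qed
  have schwarz: "norm (\<phi> z) \<le> norm z"
    using Schwarz_Lemma(1)[OF hol\<phi> _ \<phi>_lt_1] z by (simp add: \<phi>_def a_def)
  have "cmod (G z - a) = cmod (\<phi> z) * cmod (G z + cnj a)"
    using den[OF z] by (simp add: \<phi>_def norm_divide)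
  also have "\<dots> = cmod (\<phi> z) * cmod ((G z - a) + 2 * of_real (Re a))"
    by (rule arg_cong[where f = "\<lambda>w. cmod (\<phi> z) * cmod w"]) (simp add: complex_eq_iff)
  also have "\<dots> \<le> cmod z * (cmod (G z - a) + 2 * Re a)"
    using Re_a by (intro mult_mono schwarz norm_triangle_le) (auto simp: norm_mult)
  finally show ?thesis
    by (simp add: a_def algebra_simps)
qed

lemma Re_holomorphic_affine_combination_ge:
  fixes g :: "complex \<Rightarrow> complex"
  assumes holg: "g holomorphic_on ball 0 1"
    and gt: "\<And>w. w \<in> ball 0 1 \<Longrightarrow> Re (g w) > b"
    and z: "z \<in> ball 0 1" "z \<noteq> 0"
    and \<zeta>: "cmod \<zeta> \<le> (1 - cmod z) / (2 * cmod z)"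
  shows "Re (g 0 + \<zeta> * (g z - g 0)) \<ge> b"
proof -
  define G where "G = (\<lambda>w. g w - of_real b)"
  have bound: "cmod (G z - G 0) * (1 - cmod z) \<le> 2 * Re (G 0) * cmod z"
    using gt z by (intro Re_pos_holomorphic_diff_bound) (auto simp: G_def intro!: holomorphic_intros holg)
  have z_pos: "cmod z > 0"
    using z by simp
  have "cmod (\<zeta> * (G z - G 0)) \<le> (1 - cmod z) / (2 * cmod z) * cmod (G z - G 0)"
    unfolding norm_mult by (rule mult_right_mono[OF \<zeta>]) simp
  also have "\<dots> = cmod (G z - G 0) * (1 - cmod z) / (2 * cmod z)"
    by simp
  also have "\<dots> \<le> 2 * Re (G 0) * cmod z / (2 * cmod z)"
    using bound z_pos by (intro divide_right_mono) auto
  also have "\<dots> = Re (G 0)"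
    using z_pos by simp
  finally have "- Re (\<zeta> * (G z - G 0)) \<le> Re (G 0)"
    using abs_Re_le_cmod[of "\<zeta> * (G z - G 0)"] by linarith
  then show ?thesis
    by (simp add: G_def)
qed

lemma inner_vec_complex:
  fixes a x :: "complex^'n"
  shows "inner a x = Re (\<Sum>i\<in>UNIV. cnj (a $ i) * x $ i)"
  by (simp add: inner_vec_def inner_complex_def Re_sum)

lemma holomorphic_affine_combination_in_closed_convex:
  fixes f :: "complex \<Rightarrow> complex^'n" and K :: "(complex^'n) set"
  assumes "convex K" "closed K"
    and hol: "\<And>i. (\<lambda>w. f w $ i) holomorphic_on ball 0 1"
    and fK: "f ` ball 0 1 \<subseteq> K"
    and z: "z \<in> ball 0 1" "z \<noteq> 0"
    and \<zeta>: "cmod \<zeta> \<le> (1 - cmod z) / (2 * cmod z)"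
  shows "f 0 + \<zeta> *s (f z - f 0) \<in> K"
proof (rule ccontr)
  assume "f 0 + \<zeta> *s (f z - f 0) \<notin> K"
  then obtain a b where sep: "inner a (f 0 + \<zeta> *s (f z - f 0)) < b" "\<forall>x\<in>K. inner a x > b"
    using separating_hyperplane_closed_point[OF assms(1,2)] by blast
  define \<psi> where "\<psi> = (\<lambda>x::complex^'n. \<Sum>i\<in>UNIV. cnj (a $ i) * x $ i)"
  have inner_a: "inner a x = Re (\<psi> x)" for x
    unfolding \<psi>_def by (rule inner_vec_complex)
  have "\<psi> \<circ> f holomorphic_on ball 0 1"
    unfolding \<psi>_def o_def by (intro holomorphic_intros hol)
  moreover have "Re ((\<psi> \<circ> f) w) > b" if "w \<in> ball 0 1" for w
  proof -
    have "f w \<in> K"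
      using fK that by blast
    then show ?thesis
      using sep(2) by (simp add: inner_a)
  qed
  ultimately have "Re ((\<psi> \<circ> f) 0 + \<zeta> * ((\<psi> \<circ> f) z - (\<psi> \<circ> f) 0)) \<ge> b"
    using z \<zeta> by (rule Re_holomorphic_affine_combination_ge)
  moreover have "(\<psi> \<circ> f) 0 + \<zeta> * ((\<psi> \<circ> f) z - (\<psi> \<circ> f) 0) = \<psi> (f 0 + \<zeta> *s (f z - f 0))"
    by (simp add: \<psi>_def sum_distrib_left algebra_simps flip: sum.distrib sum_subtractf)
  ultimately have "Re (\<psi> (f 0 + \<zeta> *s (f z - f 0))) \<ge> b"
    by metis
  with sep(1) show False
    unfolding inner_a by linarith
qed

lemma is_cnorm_scaleR:
  assumes "is_cnorm N"
  shows "N (u *\<^sub>R x) = \<bar>u\<bar> * N x"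
proof -
  have "u *\<^sub>R x = complex_of_real u *s x"
    by (simp add: vec_eq_iff complex_eq_iff)
  then show ?thesis
    using assms by (simp add: is_cnorm_def)
qed

lemma convex_on_cnorm:
  assumes "is_cnorm N"
  shows "convex_on UNIV N"
proof (rule convex_onI)
  fix t :: real and x y
  assume "t > 0" "t < 1"
  then have "N ((1 - t) *\<^sub>R x) + N (t *\<^sub>R y) = (1 - t) * N x + t * N y"
    by (simp add: is_cnorm_scaleR[OF assms])
  moreover have "N ((1 - t) *\<^sub>R x + t *\<^sub>R y) \<le> N ((1 - t) *\<^sub>R x) + N (t *\<^sub>R y)"
    using assms by (simp add: is_cnorm_def)
  ultimately show "N ((1 - t) *\<^sub>R x + t *\<^sub>R y) \<le> (1 - t) * N x + t * N y"
    by simp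
qed simp

lemma closed_convex_cnorm_sublevel:
  fixes N :: "complex^'n \<Rightarrow> real"
  assumes "is_cnorm N"
  shows "closed {x. N x \<le> c}" "convex {x. N x \<le> c}"
proof -
  have "continuous_on UNIV N"
    using convex_on_cnorm[OF assms] by (rule convex_on_continuous[OF open_UNIV])
  then show "closed {x. N x \<le> c}"
    by (intro closed_Collect_le) auto
  show "convex {x. N x \<le> c}"
    unfolding convex_def
  proof clarsimp
    fix x y and u v :: real
    assume "N x \<le> c" "N y \<le> c" "u \<ge> 0" "v \<ge> 0" "u + v = 1"
    then have "u = 1 - v"
      by simp
    then have "N (u *\<^sub>R x + v *\<^sub>R y) \<le> u * N x + v * N y"
      using convex_onD[OF convex_on_cnorm[OF assms], of v x y] \<open>u \<ge> 0\<close> \<open>v \<ge> 0\<close> by simp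
    also have "\<dots> \<le> u * c + v * c"
      using \<open>N x \<le> c\<close> \<open>N y \<le> c\<close> \<open>u \<ge> 0\<close> \<open>v \<ge> 0\<close> by (intro add_mono mult_left_mono)
    finally show "N (u *\<^sub>R x + v *\<^sub>R y) \<le> c"
      using \<open>u + v = 1\<close> by (simp flip: distrib_right)
  qed
qed

theorem lemma13p2:
  fixes N :: "complex^'n \<Rightarrow> real"
    and f :: "complex \<Rightarrow> complex^'n"
  assumes "is_cnorm N"
    and "\<And>i. (\<lambda>w. f w $ i) holomorphic_on ball 0 1"
    and "f ` ball 0 1 \<subseteq> closure {x. N x < 1}"
    and "z \<in> ball 0 1" and "z \<noteq> 0"
    and "cmod \<zeta> \<le> (1 - cmod z) / (2 * cmod z)"
  shows "N (f 0 + \<zeta> *s (f z - f 0)) \<le> 1"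
proof -
  note ball = closed_convex_cnorm_sublevel[OF assms(1), of 1]
  have "closure {x. N x < 1} \<subseteq> {x. N x \<le> 1}"
    by (rule closure_minimal[OF _ ball(1)]) auto
  then have "f 0 + \<zeta> *s (f z - f 0) \<in> {x. N x \<le> 1}"
    using assms(2-6) by (intro holomorphic_affine_combination_in_closed_convex[OF ball(2,1)]) auto
  then show ?thesis
    by simp
qed

end
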